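(* Let $q$ be a prime power and $1\le t_i\le t_o<s$. If there exists a linear $(t_i,t_o,s,q)$-AONT, then there exists a linear $(t_i,t_o,s-1,q)$-AONT.
   Context: A linear $(t_i,t_o,s,q)$-AONT is given by an invertible $s\times s$ matrix $M$ over $\mathbb{F}_q$ defining the map $\mathbf{x}\mapsto\mathbf{y}=\mathbf{x}M^{-1}$ on row vectors of $\mathbb{F}_q^s$, such that for every set $I$ of $t_i$ input coordinates and every set $J$ of $s-t_o$ output coordinates, the pair $((x_i)_{i\in I},(y_j)_{j\in J})$ takes every value in $\mathbb{F}_q^{t_i+s-t_o}$ equally often (exactly $q^{t_o-t_i}$ times) as $\mathbf{x}$ ranges over $\mathbb{F}_q^s$. Equivalently, $M$ is invertible and every $t_o\times t_i$ submatrix of $M$ has rank $t_i$. *)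

theory Defs
  imports "Jordan_Normal_Form.DL_Rank_Submatrix"
begin

definition mat_rank :: "'a::field mat \<Rightarrow> nat" where
  "mat_rank A = vec_space.rank (dim_row A) A"

text \<open>Linear (t_i,t_o,s,q)-AONT given by the s x s matrix M over the field 'a (q = CARD('a)):
  M is invertible and every t_o x t_i submatrix (rows = t_o output coordinates,
  columns = t_i input coordinates) has rank t_i.\<close>
definition linear_AONT :: "nat \<Rightarrow> nat \<Rightarrow> nat \<Rightarrow> 'a::field mat \<Rightarrow> bool" where
  "linear_AONT ti to s M \<longleftrightarrow>
     M \<in> carrier_mat s s \<and> invertible_mat M \<and>
     (\<forall>R C. R \<subseteq> {..<s} \<and> C \<subseteq> {..<s} \<and> card R = to \<and> card C = ti \<longrightarrow>
        mat_rank (submatrix M R C) = ti)"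

end

theory Submission
  imports Defs
begin

text \<open>Expanding the determinant of the invertible matrix M along its first row gives a column j
  whose (0, j)-minor is nonzero, so deleting the first row and the j-th column of M leaves an
  invertible (s - 1) x (s - 1) matrix. Every t_o x t_i submatrix of this minor is a t_o x t_i
  submatrix of M, hence still has rank t_i, so the minor is a linear (t_i, t_o, s - 1, q)-AONT.\<close>

lemma pick_image_strict_mono:
  assumes f: "strict_mono (f :: nat \<Rightarrow> nat)" and n: "n < card R \<or> infinite R"
  shows "pick (f ` R) n = f (pick R n)"
proof -
  let ?x = "pick R n"
  have "{a \<in> f ` R. a < f ?x} = f ` {a \<in> R. a < ?x}"
    using strict_mono_less[OF f] by auto
  moreover have "inj_on f {a \<in> R. a < ?x}"
    using strict_mono_imp_inj_on[OF f] inj_on_subset by blast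
  ultimately have "card {a \<in> f ` R. a < f ?x} = n"
    using card_image card_pick[OF n] by metis
  then show ?thesis
    using pick_card_in_set[of "f ?x" "f ` R"] pick_in_set[OF n] by auto
qed

lemma card_bounded_subset:
  assumes "R \<subseteq> {..<m}"
  shows "card {i. i < m \<and> i \<in> R} = card R"
  using assms by (auto intro!: arg_cong[where f = card])

definition skip_index :: "nat \<Rightarrow> nat \<Rightarrow> nat" where
  "skip_index i k = (if k < i then k else Suc k)"

lemma strict_mono_skip_index: "strict_mono (skip_index i)"
  unfolding strict_mono_def skip_index_def by auto

lemma inj_on_skip_index: "inj_on (skip_index i) R"
  using strict_mono_imp_inj_on[OF strict_mono_skip_index] inj_on_subset by blast

lemma skip_index_image_bounded:
  assumes "R \<subseteq> {..<m - 1}"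
  shows "skip_index i ` R \<subseteq> {..<m}"
  using assms unfolding skip_index_def by auto

lemma submatrix_mat_delete:
  assumes R: "R \<subseteq> {..<dim_row A - 1}" and C: "C \<subseteq> {..<dim_col A - 1}"
  shows "submatrix (mat_delete A i j) R C = submatrix A (skip_index i ` R) (skip_index j ` C)"
    (is "?lhs = ?rhs")
proof -
  have R': "skip_index i ` R \<subseteq> {..<dim_row A}" and C': "skip_index j ` C \<subseteq> {..<dim_col A}"
    using skip_index_image_bounded[OF R] skip_index_image_bounded[OF C] .
  have dims: "dim_row ?lhs = card R" "dim_col ?lhs = card C"
    "dim_row ?rhs = card R" "dim_col ?rhs = card C"
    using card_bounded_subset[OF R] card_bounded_subset[OF C]
      card_bounded_subset[OF R'] card_bounded_subset[OF C']
    by (simp_all add: dim_submatrix card_image inj_on_skip_index)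
  show ?thesis
  proof (rule eq_matI)
    fix a b assume "a < dim_row ?rhs" "b < dim_col ?rhs"
    then have a: "a < card R" and b: "b < card C" using dims by auto
    have "pick R a < dim_row A - 1" "pick C b < dim_col A - 1"
      using pick_in_set[of a R] pick_in_set[of b C] a b R C by auto
    then have "?lhs $$ (a, b) = A $$ (skip_index i (pick R a), skip_index j (pick C b))"
      using a b card_bounded_subset[OF R] card_bounded_subset[OF C]
      by (simp add: submatrix_index mat_delete_def skip_index_def)
    also have "\<dots> = ?rhs $$ (a, b)"
      using a b card_bounded_subset[OF R'] card_bounded_subset[OF C']
      by (simp add: submatrix_index card_image inj_on_skip_index
          pick_image_strict_mono[OF strict_mono_skip_index])
    finally show "?lhs $$ (a, b) = ?rhs $$ (a, b)" .
  qed (use dims in auto)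
qed

lemma invertible_mat_iff_det_nonzero:
  assumes A: "(A :: 'a :: field mat) \<in> carrier_mat n n"
  shows "invertible_mat A \<longleftrightarrow> det A \<noteq> 0"
proof
  assume "invertible_mat A"
  then obtain B where BA: "B * A = 1\<^sub>m (dim_row B)" and AB: "A * B = 1\<^sub>m n"
    using A unfolding invertible_mat_def inverts_mat_def by auto
  have "B \<in> carrier_mat n n"
    using arg_cong[OF BA, of dim_col] arg_cong[OF AB, of dim_col] A by auto
  then show "det A \<noteq> 0"
    using arg_cong[OF BA, of det] A by (auto simp: det_mult)
next
  assume "det A \<noteq> 0"
  then have "A \<in> Units (ring_mat TYPE('a) n undefined)"
    by (rule det_non_zero_imp_unit[OF A])
  then show "invertible_mat A"
    using A unfolding Units_def ring_mat_def invertible_mat_def inverts_mat_def by auto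
qed

lemma exists_mat_delete_det_nonzero:
  assumes A: "(A :: 'a :: comm_ring_1 mat) \<in> carrier_mat n n" and i: "i < n"
    and det: "det A \<noteq> 0"
  obtains j where "j < n" "det (mat_delete A i j) \<noteq> 0"
proof -
  have "(\<Sum>j<n. A $$ (i, j) * cofactor A i j) \<noteq> 0"
    using laplace_expansion_row[OF A i] det by simp
  then obtain j where "j < n" "cofactor A i j \<noteq> 0"
    by (metis (no_types, lifting) mult_zero_right sum.neutral lessThan_iff)
  then show thesis
    using that unfolding cofactor_def by (metis mult_zero_right)
qed

lemma linear_AONT_mat_delete:
  assumes aont: "linear_AONT ti to s M" and inv: "invertible_mat (mat_delete M i j)"
  shows "linear_AONT ti to (s - 1) (mat_delete M i j)"
proof -
  have M: "M \<in> carrier_mat s s"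
    using aont unfolding linear_AONT_def by auto
  have "mat_rank (submatrix (mat_delete M i j) R C) = ti"
    if R: "R \<subseteq> {..<s - 1}" and C: "C \<subseteq> {..<s - 1}" and "card R = to" "card C = ti" for R C
  proof -
    have "skip_index i ` R \<subseteq> {..<s}" "skip_index j ` C \<subseteq> {..<s}"
      using skip_index_image_bounded[OF R] skip_index_image_bounded[OF C] .
    moreover have "card (skip_index i ` R) = to" "card (skip_index j ` C) = ti"
      using that by (simp_all add: card_image inj_on_skip_index)
    ultimately show ?thesis
      using aont R C M unfolding linear_AONT_def by (simp add: submatrix_mat_delete)
  qed
  moreover have "mat_delete M i j \<in> carrier_mat (s - 1) (s - 1)"
    using M by auto
  ultimately show ?thesis
    using inv unfolding linear_AONT_def by blast
qed

theorem mainTheorem7: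
  fixes M :: "'a::{finite,field} mat" and ti to s :: nat
  assumes "1 \<le> ti" and "ti \<le> to" and "to < s"
    and "linear_AONT ti to s M"
  shows "\<exists>M' :: 'a mat. linear_AONT ti to (s - 1) M'"
proof -
  have M: "M \<in> carrier_mat s s" and "invertible_mat M"
    using assms(4) unfolding linear_AONT_def by auto
  then have "det M \<noteq> 0"
    using invertible_mat_iff_det_nonzero by blast
  moreover have "0 < s"
    using assms(3) by simp
  ultimately obtain j where "det (mat_delete M 0 j) \<noteq> 0"
    using exists_mat_delete_det_nonzero[OF M] by blast
  then have "invertible_mat (mat_delete M 0 j)"
    using M by (subst invertible_mat_iff_det_nonzero[of _ "s - 1"]) auto
  then show ?thesis
    using linear_AONT_mat_delete[OF assms(4)] by blast
qed

end
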